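(* Assume the Lang–Waldschmidt conjecture: for every $\epsilon>0$ there is $C(\epsilon)>0$ such that for all positive integers $a_1,\dots,a_n$ and nonzero integers $b_1,\dots,b_n$ with $a_1^{b_1}\cdots a_n^{b_n}\neq1$, $$ \left|a_1^{b_1}\cdots a_n^{b_n}-1\right|\ge\frac{C(\epsilon)\max_j|b_j|}{|b_1\cdots b_na_1\cdots a_n|^{1+\epsilon}}. $$ Let $\epsilon>0$. Then there is a constant $C'_\epsilon$ such that for all $x\in\mathbb{P}^1(\mathbb{Q})\setminus\{0,1,\infty\}$, $$ \lambda_{\mathbb{P}^1,\infty}(1,x)<(1+\epsilon)N^{(1)}_{\mathbb{P}^1}([0]+[\infty],x)+\epsilon\, h(x)+C'_\epsilon. $$
   Context: For $x=b/c\in\mathbb{Q}$ with $b,c$ coprime integers, $h(x)=\log\max\{|b|,|c|\}$. $\lambda_{\mathbb{P}^1,\infty}(1,x)=\log^+(|1-x|^{-1})$ up to a bounded function, where $\log^+t=\log\max\{1,t\}$. Up to a bounded function, $N^{(1)}_{\mathbb{P}^1}([0]+[\infty],x)=\log\mathrm{rad}(bc)$, where $\mathrm{rad}(m)$ is the product of the distinct primes dividing $m$ (this is the truncated counting function $\sum_p\min\{\lambda_{\mathbb{P}^1,p}([0]+[\infty],x),\log p\}$). *)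

theory Defs
  imports Complex_Main "HOL-Computational_Algebra.Primes"
begin

definition logplus :: "real \<Rightarrow> real" where
  "logplus t = ln (max 1 t)"

text \<open>Radical: product of the distinct primes dividing m (rad 0 = 1 by this convention; not used).\<close>
definition rad :: "nat \<Rightarrow> nat" where
  "rad m = (\<Prod>p\<in>prime_factors m. p)"

definition height :: "rat \<Rightarrow> real" where
  "height x = (case quotient_of x of (b, c) \<Rightarrow> ln (real_of_int (max \<bar>b\<bar> \<bar>c\<bar>)))"

text \<open>Proximity function lambda_{P^1,infty}(1,x) = log^+ (|1-x|^{-1}) (representative).\<close>
definition lambda_one :: "rat \<Rightarrow> real" where
  "lambda_one x = logplus (1 / \<bar>1 - real_of_rat x\<bar>)"

text \<open>Truncated counting function N^(1)([0]+[infty],x) = log rad(bc) (representative).\<close>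
definition N1_zero_inf :: "rat \<Rightarrow> real" where
  "N1_zero_inf x = (case quotient_of x of (b, c) \<Rightarrow> ln (real (rad (nat \<bar>b * c\<bar>))))"

definition Lang_Waldschmidt :: bool where
  "Lang_Waldschmidt \<longleftrightarrow>
    (\<forall>\<epsilon>::real. \<epsilon> > 0 \<longrightarrow> (\<exists>C::real. C > 0 \<and>
      (\<forall>(n::nat) (a::nat \<Rightarrow> int) (b::nat \<Rightarrow> int).
         n \<ge> 1 \<longrightarrow> (\<forall>j<n. a j > 0) \<longrightarrow> (\<forall>j<n. b j \<noteq> 0) \<longrightarrow>
         (\<Prod>j<n. real_of_int (a j) powi b j) \<noteq> 1 \<longrightarrow>
         \<bar>(\<Prod>j<n. real_of_int (a j) powi b j) - 1\<bar> \<ge>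
           C * real_of_int (Max ((\<lambda>j. \<bar>b j\<bar>) ` {..<n})) /
             \<bar>real_of_int ((\<Prod>j<n. b j) * (\<Prod>j<n. a j))\<bar> powr (1 + \<epsilon>))))"

end

theory Submission
  imports Defs
begin

(* Write x = m/n in lowest terms.  For x < 0 the proximity term vanishes.  For x > 0,
   m/n is the product of p^(v_p(m) - v_p(n)) over the primes p dividing mn, and by coprimality
   |v_p(m) - v_p(n)| = v_p(mn).  The Lang-Waldschmidt conjecture applied to this product gives
   |x - 1| >= C / (E * rad(mn))^(1 + delta) with E the product of the exponents v_p(mn).
   Since every exponent satisfies e <= c p^(delta e), with c = 1 as soon as p^delta >= 2, we get
   E = O((mn)^delta), and log(mn) <= 2 h(x).  Taking logarithms with delta = min(1, eps/4)
   yields the claim. *)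

definition prod_multiplicities :: "nat \<Rightarrow> nat" where
  "prod_multiplicities n = (\<Prod>p\<in>prime_factors n. multiplicity p n)"

lemma rad_pos: "rad n > 0"
  unfolding rad_def by (intro prod_pos) (auto intro: prime_gt_0_nat)

lemma prod_multiplicities_pos: "prod_multiplicities n > 0"
  unfolding prod_multiplicities_def
  by (intro prod_pos) (auto simp: in_prime_factors_iff prime_multiplicity_gt_zero_iff)

lemma of_nat_le_powr_div:
  fixes b \<delta> :: real
  assumes "\<delta> > 0" "b \<ge> 2"
  shows "real e \<le> b powr (\<delta> * e) / (\<delta> * ln 2)"
proof -
  have "\<delta> * ln 2 * e \<le> exp (\<delta> * ln 2 * e)"
    using exp_ge_add_one_self[of "\<delta> * ln 2 * e"] by linarith
  also have "\<dots> = 2 powr (\<delta> * e)"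
    by (simp add: powr_def mult_ac)
  also have "\<dots> \<le> b powr (\<delta> * e)"
    using assms by (intro powr_mono2) auto
  finally show ?thesis
    using assms by (simp add: field_simps)
qed

lemma of_nat_le_powr:
  fixes b \<delta> :: real
  assumes "b > 0" "2 \<le> b powr \<delta>"
  shows "real e \<le> b powr (\<delta> * e)"
proof -
  have "real e \<le> 2 ^ e"
    using less_exp[of e] by (metis less_imp_le of_nat_le_iff of_nat_numeral of_nat_power)
  also have "\<dots> \<le> (b powr \<delta>) ^ e"
    using assms by (intro power_mono) auto
  also have "\<dots> = b powr (\<delta> * e)"
    using assms by (simp add: powr_realpow[symmetric] powr_powr)
  finally show ?thesis .
qed

lemma of_nat_le_mult_powr:
  fixes \<delta> :: real and p e :: nat
  assumes "\<delta> > 0" "p \<ge> 2"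
  shows "real e \<le> (if real p < 2 powr (1 / \<delta>) then max 1 (1 / (\<delta> * ln 2)) else 1)
                    * real p powr (\<delta> * e)"
proof (cases "real p < 2 powr (1 / \<delta>)")
  case True
  have "real e \<le> real p powr (\<delta> * e) / (\<delta> * ln 2)"
    using assms by (intro of_nat_le_powr_div) auto
  also have "\<dots> \<le> max 1 (1 / (\<delta> * ln 2)) * real p powr (\<delta> * e)"
    by (simp add: divide_inverse mult.commute mult_left_mono)
  finally show ?thesis
    using True by simp
next
  case False
  have "2 = (2 powr (1 / \<delta>)) powr \<delta>"
    using assms by (simp add: powr_powr)
  also have "\<dots> \<le> real p powr \<delta>"
    using False assms by (intro powr_mono2) auto
  finally have "real e \<le> real p powr (\<delta> * e)"
    using assms by (intro of_nat_le_powr) auto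
  then show ?thesis
    using False by simp
qed

lemma prod_multiplicities_le_powr:
  fixes \<delta> :: real
  assumes "\<delta> > 0"
  obtains K where "K \<ge> 1" "\<And>N. N > 0 \<Longrightarrow> real (prod_multiplicities N) \<le> K * real N powr \<delta>"
proof -
  define K0 where "K0 = max 1 (1 / (\<delta> * ln 2))"
  define small where "small = {p :: nat. real p < 2 powr (1 / \<delta>)}"
  define Kp where "Kp p = (if p \<in> small then K0 else 1)" for p
  define M where "M = nat \<lceil>2 powr (1 / \<delta>)\<rceil>"
  have "K0 \<ge> 1"
    by (simp add: K0_def)
  have per_prime: "real e \<le> Kp p * real p powr (\<delta> * e)" if "prime p" for p e
    using of_nat_le_mult_powr[OF \<open>\<delta> > 0\<close> prime_ge_2_nat[OF that]]
    unfolding Kp_def K0_def small_def by simp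
  show ?thesis
  proof
    show "1 \<le> K0 ^ M"
      using \<open>K0 \<ge> 1\<close> by simp
    fix n :: nat
    assume "n > 0"
    let ?P = "prime_factors n"
    have "real (prod_multiplicities n) \<le> (\<Prod>p\<in>?P. Kp p * real p powr (\<delta> * multiplicity p n))"
      unfolding prod_multiplicities_def of_nat_prod
      by (intro prod_mono) (auto intro: per_prime)
    also have "\<dots> = (\<Prod>p\<in>?P. Kp p) * (\<Prod>p\<in>?P. real (p ^ multiplicity p n) powr \<delta>)"
      by (simp add: prod.distrib powr_realpow[symmetric] powr_powr mult_ac prime_factors_gt_0_nat
          cong: prod.cong)
    also have "(\<Prod>p\<in>?P. real (p ^ multiplicity p n) powr \<delta>)
               = real (\<Prod>p\<in>?P. p ^ multiplicity p n) powr \<delta>"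
      by (simp add: prod_powr_distrib)
    also have "(\<Prod>p\<in>?P. p ^ multiplicity p n) = n"
      using \<open>n > 0\<close> by (simp add: prod_prime_factors)
    also have "(\<Prod>p\<in>?P. Kp p) = K0 ^ card (?P \<inter> small)"
      by (simp add: Kp_def prod.If_cases Int_def)
    also have "\<dots> \<le> K0 ^ M"
    proof (intro power_increasing \<open>K0 \<ge> 1\<close>)
      have "?P \<inter> small \<subseteq> {..<M}"
        unfolding M_def small_def by auto linarith
      then show "card (?P \<inter> small) \<le> M"
        using card_mono[of "{..<M}"] by fastforce
    qed
    finally show "real (prod_multiplicities n) \<le> K0 ^ M * real n powr \<delta>"
      by (simp add: mult_right_mono)
  qed
qed

lemma prod_prime_power_multiplicity_superset:
  fixes n :: nat
  assumes "n \<noteq> 0" "finite P" "prime_factors n \<subseteq> P" "\<forall>p\<in>P. prime p"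
  shows "(\<Prod>p\<in>P. p ^ multiplicity p n) = n"
proof -
  have "(\<Prod>p\<in>P. p ^ multiplicity p n) = (\<Prod>p\<in>prime_factors n. p ^ multiplicity p n)"
    using assms by (intro prod.mono_neutral_right) (auto simp: prime_factors_multiplicity)
  also have "\<dots> = n"
    using assms(1) by (simp add: prod_prime_factors)
  finally show ?thesis .
qed

lemma prod_powi_multiplicity_diff:
  fixes m n :: nat
  assumes "m \<noteq> 0" "n \<noteq> 0"
  shows "(\<Prod>p\<in>prime_factors (m * n). real p powi (int (multiplicity p m) - int (multiplicity p n)))
           = real m / real n"
proof -
  let ?P = "prime_factors (m * n)"
  have "(\<Prod>p\<in>?P. real p powi (int (multiplicity p m) - int (multiplicity p n)))
        = (\<Prod>p\<in>?P. real p ^ multiplicity p m / real p ^ multiplicity p n)"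
  proof (intro prod.cong refl)
    fix p assume "p \<in> ?P"
    then have "real p \<noteq> 0"
      using prime_gt_0_nat[OF in_prime_factors_imp_prime] by fastforce
    then show "real p powi (int (multiplicity p m) - int (multiplicity p n))
               = real p ^ multiplicity p m / real p ^ multiplicity p n"
      by (simp add: power_int_diff)
  qed
  also have "\<dots> = real (\<Prod>p\<in>?P. p ^ multiplicity p m) / real (\<Prod>p\<in>?P. p ^ multiplicity p n)"
    by (simp add: prod_dividef)
  also have "(\<Prod>p\<in>?P. p ^ multiplicity p m) = m"
    using assms by (auto intro: prod_prime_power_multiplicity_superset simp: prime_factors_product)
  also have "(\<Prod>p\<in>?P. p ^ multiplicity p n) = n"
    using assms by (auto intro: prod_prime_power_multiplicity_superset simp: prime_factors_product)
  finally show ?thesis .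
qed

lemma abs_multiplicity_diff_coprime:
  fixes m n p :: nat
  assumes "prime p" "coprime m n" "m \<noteq> 0" "n \<noteq> 0"
  shows "\<bar>int (multiplicity p m) - int (multiplicity p n)\<bar> = int (multiplicity p (m * n))"
proof -
  have "\<not> (p dvd m \<and> p dvd n)"
    using assms(1,2) by (metis coprime_common_divisor not_prime_unit)
  then have "multiplicity p m = 0 \<or> multiplicity p n = 0"
    by (auto simp: not_dvd_imp_multiplicity_0)
  moreover have "multiplicity p (m * n) = multiplicity p m + multiplicity p n"
    using assms by (simp add: prime_elem_multiplicity_mult_distrib)
  ultimately show ?thesis by auto
qed

definition Lang_Waldschmidt_bound :: "real \<Rightarrow> real \<Rightarrow> bool" where
  "Lang_Waldschmidt_bound \<epsilon> C \<longleftrightarrow>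
    (\<forall>(n::nat) (a::nat \<Rightarrow> int) (b::nat \<Rightarrow> int).
       n \<ge> 1 \<longrightarrow> (\<forall>j<n. a j > 0) \<longrightarrow> (\<forall>j<n. b j \<noteq> 0) \<longrightarrow>
       (\<Prod>j<n. real_of_int (a j) powi b j) \<noteq> 1 \<longrightarrow>
       \<bar>(\<Prod>j<n. real_of_int (a j) powi b j) - 1\<bar> \<ge>
         C * real_of_int (Max ((\<lambda>j. \<bar>b j\<bar>) ` {..<n})) /
           \<bar>real_of_int ((\<Prod>j<n. b j) * (\<Prod>j<n. a j))\<bar> powr (1 + \<epsilon>))"

lemma Lang_Waldschmidt_imp_bound:
  assumes "Lang_Waldschmidt" and "\<epsilon> > 0"
  obtains C where "C > 0" and "Lang_Waldschmidt_bound \<epsilon> C"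
  using assms unfolding Lang_Waldschmidt_def Lang_Waldschmidt_bound_def by blast

lemma Lang_Waldschmidt_bound_set:
  fixes S :: "'i set" and a b :: "'i \<Rightarrow> int"
  assumes LW: "Lang_Waldschmidt_bound \<epsilon> C"
    and S: "finite S" "S \<noteq> {}"
    and a: "\<And>i. i \<in> S \<Longrightarrow> a i > 0" and b: "\<And>i. i \<in> S \<Longrightarrow> b i \<noteq> 0"
    and ne1: "(\<Prod>i\<in>S. real_of_int (a i) powi b i) \<noteq> 1"
  shows "C * real_of_int (Max ((\<lambda>i. \<bar>b i\<bar>) ` S)) /
           \<bar>real_of_int ((\<Prod>i\<in>S. b i) * (\<Prod>i\<in>S. a i))\<bar> powr (1 + \<epsilon>)
         \<le> \<bar>(\<Prod>i\<in>S. real_of_int (a i) powi b i) - 1\<bar>"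
proof -
  obtain h where h: "bij_betw h {..<card S} S"
    using ex_bij_betw_nat_finite[OF S(1)] by (auto simp: atLeast0LessThan)
  have reindex: "(\<Prod>j<card S. f (h j)) = (\<Prod>i\<in>S. f i)" for f :: "'i \<Rightarrow> 'b::comm_monoid_mult"
    using prod.reindex_bij_betw[OF h] .
  have image: "(\<lambda>j. f (h j)) ` {..<card S} = f ` S" for f :: "'i \<Rightarrow> 'b"
    using h by (auto simp: bij_betw_def image_comp[symmetric, unfolded comp_def])
  have "card S \<ge> 1"
    using S by (simp add: Suc_leI card_gt_0_iff)
  moreover have "\<forall>j<card S. a (h j) > 0" and "\<forall>j<card S. b (h j) \<noteq> 0"
    using a b bij_betwE[OF h] by auto
  moreover have "(\<Prod>j<card S. real_of_int (a (h j)) powi b (h j)) \<noteq> 1"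
    using ne1 by (simp add: reindex[of "\<lambda>i. real_of_int (a i) powi b i"])
  ultimately show ?thesis
    using LW[unfolded Lang_Waldschmidt_bound_def, rule_format, of "card S" "a \<circ> h" "b \<circ> h"]
    by (simp add: image[of "\<lambda>i. \<bar>b i\<bar>"] reindex[of "\<lambda>i. real_of_int (a i) powi b i"]
        reindex[of "\<lambda>i. real_of_int (a i)"] reindex[of "\<lambda>i. real_of_int (b i)"])
qed

lemma Lang_Waldschmidt_bound_ratio:
  fixes m n :: nat
  assumes LW: "Lang_Waldschmidt_bound \<epsilon> C" and "C > 0"
    and mn: "m > 0" "n > 0" "coprime m n" "m \<noteq> n"
  shows "C / real (prod_multiplicities (m * n) * rad (m * n)) powr (1 + \<epsilon>)
           \<le> \<bar>real m / real n - 1\<bar>"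
proof -
  let ?P = "prime_factors (m * n)"
  define e where "e p = int (multiplicity p m) - int (multiplicity p n)" for p
  have abs_e: "\<bar>e p\<bar> = int (multiplicity p (m * n))" and e_nz: "e p \<noteq> 0" if "p \<in> ?P" for p
  proof -
    show "\<bar>e p\<bar> = int (multiplicity p (m * n))"
      using that mn unfolding e_def by (intro abs_multiplicity_diff_coprime) auto
    moreover have "multiplicity p (m * n) > 0"
      using that by (auto simp: in_prime_factors_iff prime_multiplicity_gt_zero_iff)
    ultimately show "e p \<noteq> 0" by auto
  qed
  have prod_e: "(\<Prod>p\<in>?P. real_of_int (int p) powi e p) = real m / real n"
    using prod_powi_multiplicity_diff[of m n] mn unfolding e_def by simp
  also have "\<dots> \<noteq> 1"
    using mn by simp
  finally have ne1: "(\<Prod>p\<in>?P. real_of_int (int p) powi e p) \<noteq> 1" .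
  then have "?P \<noteq> {}"
    by auto
  have "real_of_int (Max ((\<lambda>p. \<bar>e p\<bar>) ` ?P)) \<ge> 1"
  proof -
    obtain p where p: "p \<in> ?P" using \<open>?P \<noteq> {}\<close> by blast
    then have "\<bar>e p\<bar> \<le> Max ((\<lambda>p. \<bar>e p\<bar>) ` ?P)"
      by (auto intro: Max_ge)
    moreover have "1 \<le> \<bar>e p\<bar>"
      using e_nz[OF p] by linarith
    ultimately show ?thesis by linarith
  qed
  moreover have "\<bar>real_of_int ((\<Prod>p\<in>?P. e p) * (\<Prod>p\<in>?P. int p))\<bar>
                 = real (prod_multiplicities (m * n) * rad (m * n))"
    by (simp add: abs_mult prod_multiplicities_def rad_def abs_prod abs_e flip: of_int_abs)
  moreover have "C * real_of_int (Max ((\<lambda>p. \<bar>e p\<bar>) ` ?P)) /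
      \<bar>real_of_int ((\<Prod>p\<in>?P. e p) * (\<Prod>p\<in>?P. int p))\<bar> powr (1 + \<epsilon>)
    \<le> \<bar>real m / real n - 1\<bar>"
    using Lang_Waldschmidt_bound_set[OF LW _ \<open>?P \<noteq> {}\<close> _ e_nz ne1] prod_e
    by (auto simp: prime_factors_gt_0_nat)
  ultimately show ?thesis
    using \<open>C > 0\<close> prod_multiplicities_pos rad_pos
    by (smt (verit) divide_right_mono mult_le_cancel_left1 powr_ge_zero)
qed

lemma ln_inverse_dist_one_le:
  fixes m n :: nat
  assumes LW: "Lang_Waldschmidt_bound \<delta> C" "C > 0" "\<delta> > 0"
    and K: "K > 0" "\<And>N. N > 0 \<Longrightarrow> real (prod_multiplicities N) \<le> K * real N powr \<delta>"
    and mn: "m > 0" "n > 0" "coprime m n" "m \<noteq> n"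
  shows "ln (1 / \<bar>real m / real n - 1\<bar>)
           \<le> (1 + \<delta>) * (ln (rad (m * n)) + ln K + \<delta> * ln (m * n)) - ln C"
proof -
  define E where "E = real (prod_multiplicities (m * n))"
  define R where "R = real (rad (m * n))"
  define d where "d = \<bar>real m / real n - 1\<bar>"
  have "E > 0" "R > 0"
    unfolding E_def R_def using prod_multiplicities_pos rad_pos by auto
  have bound: "C / (E * R) powr (1 + \<delta>) \<le> d"
    using Lang_Waldschmidt_bound_ratio[OF LW(1,2) mn] unfolding E_def R_def d_def by simp
  have "(E * R) powr (1 + \<delta>) > 0"
    using \<open>E > 0\<close> \<open>R > 0\<close> by simp
  with bound \<open>C > 0\<close> have "d > 0"
    by (smt (verit) divide_pos_pos)
  with bound \<open>C > 0\<close> \<open>(E * R) powr (1 + \<delta>) > 0\<close>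
  have "1 / d \<le> (E * R) powr (1 + \<delta>) / C"
    by (simp add: field_simps)
  with \<open>d > 0\<close> have "ln (1 / d) \<le> ln ((E * R) powr (1 + \<delta>) / C)"
    by (intro ln_mono) auto
  also have "\<dots> = (1 + \<delta>) * (ln E + ln R) - ln C"
    using \<open>C > 0\<close> \<open>E > 0\<close> \<open>R > 0\<close> by (simp add: ln_div ln_mult)
  finally have "ln (1 / d) \<le> (1 + \<delta>) * (ln E + ln R) - ln C" .
  moreover have "ln E \<le> ln (K * real (m * n) powr \<delta>)"
    using K(2)[of "m * n"] mn \<open>E > 0\<close> unfolding E_def by simp
  moreover have "ln (K * real (m * n) powr \<delta>) = ln K + \<delta> * ln (m * n)"
    using \<open>K > 0\<close> mn by (simp add: ln_mult)
  ultimately show ?thesis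
    using \<open>\<delta> > 0\<close> unfolding d_def R_def
    by (smt (verit) mult_left_mono)
qed

lemma logplus_eq_max_ln: "t > 0 \<Longrightarrow> logplus t = max 0 (ln t)"
  unfolding logplus_def by (simp add: max_def)

lemma lambda_one_eq_0_of_neg: "x < 0 \<Longrightarrow> lambda_one x = 0"
  unfolding lambda_one_def logplus_def by (simp add: max_def)

lemma N1_zero_inf_nonneg: "N1_zero_inf x \<ge> 0"
  using rad_pos by (simp add: N1_zero_inf_def Suc_le_eq split: prod.split)

lemma height_nonneg: "height x \<ge> 0"
proof -
  obtain b c where q: "quotient_of x = (b, c)"
    by (cases "quotient_of x")
  then have "c > 0"
    by (rule quotient_of_denom_pos)
  with q show ?thesis
    by (simp add: height_def)
qed

lemma lambda_one_le_of_pos: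
  assumes LW: "Lang_Waldschmidt_bound \<delta> C" "C > 0" "\<delta> > 0"
    and K: "K > 0" "\<And>N. N > 0 \<Longrightarrow> real (prod_multiplicities N) \<le> K * real N powr \<delta>"
    and x: "x > 0" "x \<noteq> 1"
  shows "lambda_one x \<le> max 0 ((1 + \<delta>) * (N1_zero_inf x + ln K + 2 * \<delta> * height x) - ln C)"
proof -
  obtain b c where q: "quotient_of x = (b, c)"
    by (cases "quotient_of x")
  have "c > 0" "coprime b c" "x = of_int b / of_int c"
    using q by (simp_all add: quotient_of_denom_pos quotient_of_coprime quotient_of_div)
  with x have "b > 0"
    by (simp add: zero_less_divide_iff)
  define m n where "m = nat b" and "n = nat c"
  have mn: "m > 0" "n > 0" "coprime m n" "m \<noteq> n"
    using \<open>b > 0\<close> \<open>c > 0\<close> \<open>coprime b c\<close> \<open>x = of_int b / of_int c\<close> x(2)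
    by (auto simp: m_def n_def coprime_int_iff[symmetric])
  have "real_of_rat x = real m / real n"
    using \<open>x = of_int b / of_int c\<close> \<open>b > 0\<close> \<open>c > 0\<close> by (simp add: m_def n_def of_rat_divide)
  then have lambda: "lambda_one x = max 0 (ln (1 / \<bar>real m / real n - 1\<bar>))"
    using mn by (simp add: lambda_one_def logplus_eq_max_ln abs_minus_commute)
  have N1: "N1_zero_inf x = ln (rad (m * n))"
    using q \<open>b > 0\<close> \<open>c > 0\<close> by (simp add: N1_zero_inf_def m_def n_def nat_mult_distrib abs_mult)
  have "ln b \<le> height x" and "ln c \<le> height x"
    using q \<open>b > 0\<close> \<open>c > 0\<close> by (simp_all add: height_def)
  then have "ln (real (m * n)) \<le> 2 * height x"
    using \<open>b > 0\<close> \<open>c > 0\<close> by (simp add: m_def n_def ln_mult)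
  then have "(1 + \<delta>) * (\<delta> * ln (m * n)) \<le> (1 + \<delta>) * (2 * \<delta> * height x)"
    using \<open>\<delta> > 0\<close> by (intro mult_left_mono) auto
  with ln_inverse_dist_one_le[OF LW K mn] show ?thesis
    unfolding lambda N1 by (simp add: algebra_simps)
qed

lemma lambda_one_le:
  assumes LW: "Lang_Waldschmidt_bound \<delta> C" "C > 0" "\<delta> > 0"
    and K: "K > 0" "\<And>N. N > 0 \<Longrightarrow> real (prod_multiplicities N) \<le> K * real N powr \<delta>"
    and x: "x \<noteq> 0" "x \<noteq> 1"
  shows "lambda_one x \<le> max 0 ((1 + \<delta>) * (N1_zero_inf x + ln K + 2 * \<delta> * height x) - ln C)"
proof (cases "x < 0")
  case True
  then show ?thesis by (simp add: lambda_one_eq_0_of_neg)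
next
  case False
  with x show ?thesis by (intro lambda_one_le_of_pos[OF LW K]) auto
qed

theorem lemma5p2:
  fixes \<epsilon> :: real
  assumes LW: Lang_Waldschmidt
    and eps: "\<epsilon> > 0"
  shows "\<exists>C'::real. \<forall>x::rat. x \<noteq> 0 \<and> x \<noteq> 1 \<longrightarrow>
           lambda_one x < (1 + \<epsilon>) * N1_zero_inf x + \<epsilon> * height x + C'"
proof -
  define \<delta> where "\<delta> = min 1 (\<epsilon> / 4)"
  have "\<delta> > 0" "\<delta> \<le> 1" "4 * \<delta> \<le> \<epsilon>"
    using eps by (auto simp: \<delta>_def)
  obtain C where "C > 0" and LW\<delta>: "Lang_Waldschmidt_bound \<delta> C"
    using Lang_Waldschmidt_imp_bound[OF LW \<open>\<delta> > 0\<close>] .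
  obtain K where "K \<ge> 1" and K: "\<And>N. N > 0 \<Longrightarrow> real (prod_multiplicities N) \<le> K * real N powr \<delta>"
    using prod_multiplicities_le_powr[OF \<open>\<delta> > 0\<close>] by blast
  define C' where "C' = max 0 ((1 + \<delta>) * ln K - ln C) + 1"
  show ?thesis
  proof (intro exI[of _ C'] allI impI)
    fix x :: rat
    assume x: "x \<noteq> 0 \<and> x \<noteq> 1"
    have "lambda_one x \<le> max 0 ((1 + \<delta>) * (N1_zero_inf x + ln K + 2 * \<delta> * height x) - ln C)"
      using x \<open>K \<ge> 1\<close> by (intro lambda_one_le[OF LW\<delta> \<open>C > 0\<close> \<open>\<delta> > 0\<close> _ K]) auto
    moreover have "(1 + \<delta>) * N1_zero_inf x \<le> (1 + \<epsilon>) * N1_zero_inf x"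
      using N1_zero_inf_nonneg \<open>4 * \<delta> \<le> \<epsilon>\<close> \<open>\<delta> > 0\<close> by (intro mult_right_mono) auto
    moreover have "(1 + \<delta>) * (2 * \<delta>) * height x \<le> \<epsilon> * height x"
      using height_nonneg \<open>\<delta> \<le> 1\<close> \<open>\<delta> > 0\<close> \<open>4 * \<delta> \<le> \<epsilon>\<close>
      by (intro mult_right_mono) (auto intro: order.trans[of _ "4 * \<delta>"] mult_right_mono)
    moreover have "0 \<le> (1 + \<epsilon>) * N1_zero_inf x + \<epsilon> * height x"
      using N1_zero_inf_nonneg height_nonneg eps by simp
    ultimately show "lambda_one x < (1 + \<epsilon>) * N1_zero_inf x + \<epsilon> * height x + C'"
      unfolding C'_def by (simp add: algebra_simps max_def split: if_splits)
  qed
qed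

end
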